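(* Let $F,\tilde F$ be finitely supported sequences on $\mathbb Z$ whose supports lie entirely to the left of the supports of finitely supported sequences $G,\tilde G$ (i.e. every index in the support of $F$ or $\tilde F$ is smaller than every index in the support of $G$ or $\tilde G$). Let $(a,b),(\tilde a,\tilde b),(c,d),(\tilde c,\tilde d)$ be the nonlinear Fourier series of $F,\tilde F,G,\tilde G$ respectively. Then $$\rho\bigl((a,b)(c,d),(\tilde a,\tilde b)(\tilde c,\tilde d)\bigr)\le 2\rho\bigl((a,b),(\tilde a,\tilde b)\bigr)+2\rho\bigl((c,d),(\tilde c,\tilde d)\bigr).$$
   Context: $\mathbb T$ is the unit circle, $\mathbb D$ the open unit disc, $\mathbb D^*=\{\overline z^{-1}:z\in\mathbb D\}$ (including $\infty$), and $a^*(z)=\overline{a(\overline z^{-1})}$ (so $a^*=\overline a$ on $\mathbb T$). $\int_{\mathbb T}a=\int_0^1a(e^{2\pi i\theta})d\theta$. $H^2(\mathbb D)$ is the space of $f\in L^2(\mathbb T)$ whose Fourier coefficients vanish at negative indices; $H^2(\mathbb D^* )$ is the space of $f$ with $f^*\in H^2(\mathbb D)$, and for such $f$, $f(\infty):=\overline{f^*(0)}=\int_{\mathbb T}f$. For a finitely supported $F$, its nonlinear Fourier series $(a,b)$ is the first row of the ordered product $\prod_k(1+|F_k|^2)^{-1/2}\begin{pmatrix}1&F_kz^k\\-\overline{F_k}z^{-k}&1\end{pmatrix}$ ($k$ increasing left to right). Pairs are multiplied as $(a,b)(c,d)=(ac-bd^*,ad+bc^* )$ (the first row of the product of the matrices $\begin{pmatrix}a&b\\-b^*&a^*\end{pmatrix}\begin{pmatrix}c&d\\-d^*&c^*\end{pmatrix}$).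 $\mathbf L$ is the set of pairs $(a,b)$ of measurable functions on $\mathbb T$ with $aa^*+bb^*=1$ a.e. on $\mathbb T$, $a\in H^2(\mathbb D^* )$ and $a(\infty)>0$; it carries the metric $\rho((a,b),(c,d))=\|a-c\|_{L^2(\mathbb T)}+\|b-d\|_{L^2(\mathbb T)}+|\log a(\infty)-\log c(\infty)|$. Nonlinear Fourier series of finitely supported sequences lie in $\mathbf L$. *)

theory Defs
  imports "HOL-Analysis.Analysis"
begin

text \<open>Pairs (a,b) are represented as pairs of functions on the punctured plane
  (the nonlinear Fourier series of a finitely supported sequence is a pair of
  Laurent polynomials); only their values on the unit circle enter the metric.\<close>

type_synonym nlpair = "(complex \<Rightarrow> complex) \<times> (complex \<Rightarrow> complex)"

definition star :: "(complex \<Rightarrow> complex) \<Rightarrow> complex \<Rightarrow> complex" where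
  "star f = (\<lambda>z. cnj (f (inverse (cnj z))))"

definition pmult :: "nlpair \<Rightarrow> nlpair \<Rightarrow> nlpair" where
  "pmult p q = (case p of (a, b) \<Rightarrow> case q of (c, d) \<Rightarrow>
      ((\<lambda>z. a z * c z - b z * star d z), (\<lambda>z. a z * d z + b z * star c z)))"

definition supp :: "(int \<Rightarrow> complex) \<Rightarrow> int set" where
  "supp F = {k. F k \<noteq> 0}"

text \<open>First row of the k-th factor
  (1+|F_k|^2)^(-1/2) [[1, F_k z^k], [-conj F_k z^(-k), 1]].\<close>
definition nlft_factor :: "(int \<Rightarrow> complex) \<Rightarrow> int \<Rightarrow> nlpair" where
  "nlft_factor F k =
     ((\<lambda>z. complex_of_real (1 / sqrt (1 + (cmod (F k))\<^sup>2))),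
      (\<lambda>z. complex_of_real (1 / sqrt (1 + (cmod (F k))\<^sup>2)) * F k * z powi k))"

definition nlft_one :: nlpair where
  "nlft_one = ((\<lambda>z. 1), (\<lambda>z. 0))"

text \<open>Ordered product over the (finite) support, indices increasing left to right
  (factors with F_k = 0 are the identity, so this is the product over all k).\<close>
definition nlft :: "(int \<Rightarrow> complex) \<Rightarrow> nlpair" where
  "nlft F = foldl (\<lambda>acc k. pmult acc (nlft_factor F k)) nlft_one
              (sorted_list_of_set (supp F))"

definition circ :: "real \<Rightarrow> complex" where
  "circ \<theta> = cis (2 * pi * \<theta>)"

definition L2T_norm :: "(complex \<Rightarrow> complex) \<Rightarrow> real" where
  "L2T_norm f = sqrt (set_lebesgue_integral lborel {0..1} (\<lambda>\<theta>. (cmod (f (circ \<theta>)))\<^sup>2))"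

definition intT :: "(complex \<Rightarrow> complex) \<Rightarrow> complex" where
  "intT f = set_lebesgue_integral lborel {0..1} (\<lambda>\<theta>. f (circ \<theta>))"

text \<open>a(\<infinity>) = \<integral>_T a, a positive real number for elements of L.\<close>
definition at_inf :: "(complex \<Rightarrow> complex) \<Rightarrow> complex" where
  "at_inf a = intT a"

definition rho :: "nlpair \<Rightarrow> nlpair \<Rightarrow> real" where
  "rho p q = (case p of (a, b) \<Rightarrow> case q of (c, d) \<Rightarrow>
      L2T_norm (\<lambda>z. a z - c z) + L2T_norm (\<lambda>z. b z - d z)
      + \<bar>ln (Re (at_inf a)) - ln (Re (at_inf c))\<bar>)"

end

theory Submission
  imports Defs
begin

text \<open>On the unit circle the nonlinear Fourier series \<open>(a, b)\<close> of a sequence supported in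
  \<open>[lo, hi)\<close> is a pair of trigonometric polynomials, \<open>a\<close> with frequencies in \<open>[lo - hi, 0]\<close>
  and \<open>b\<close> with frequencies in \<open>[lo, hi - 1]\<close>, such that \<open>|a|\<^sup>2 + |b|\<^sup>2 = 1\<close> and \<open>a(\<infinity>) > 0\<close>;
  this shape is preserved by multiplying series of adjacent windows.
  When \<open>(a, b)\<close> comes from \<open>[lo, m)\<close> and \<open>(c, d)\<close> from \<open>[m, hi)\<close>, the product \<open>b d\<^sup>*\<close> has only
  negative frequencies, so \<open>(a c - b d\<^sup>*)(\<infinity>) = a(\<infinity>) c(\<infinity>)\<close> and the logarithmic part of \<open>\<rho>\<close> is
  subadditive. The \<open>L\<^sup>2\<close> parts are controlled by splitting
  \<open>a c - a' c' = (a - a') c + a' (c - c')\<close> and so on, all entries being bounded by \<open>1\<close>.\<close>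

lemma norm_circ [simp]: "cmod (circ \<theta>) = 1"
  by (simp add: circ_def)

lemma inverse_cnj_on_circle: "cmod z = 1 \<Longrightarrow> inverse (cnj z) = z"
  using complex_norm_square[of z] by (intro inverse_unique) (simp add: mult.commute)

lemma cnj_on_circle: "cmod z = 1 \<Longrightarrow> cnj z = inverse z"
  by (metis complex_cnj_cnj complex_cnj_inverse inverse_cnj_on_circle)

lemma star_on_circle: "cmod z = 1 \<Longrightarrow> star f z = cnj (f z)"
  by (simp add: star_def inverse_cnj_on_circle)

lemma continuous_on_circ_comp:
  "continuous_on (sphere 0 1) f \<Longrightarrow> continuous_on {0..1} (\<lambda>\<theta>. f (circ \<theta>))"
  by (rule continuous_on_compose2[of "sphere 0 1" f _ circ])
     (auto simp: circ_def intro!: continuous_intros)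

lemma set_integral_eq_integral_01:
  fixes g :: "real \<Rightarrow> 'b::euclidean_space"
  assumes "continuous_on {0..1} g"
  shows "set_lebesgue_integral lborel {0..1} g = integral {0..1} g"
  using assms by (intro set_borel_integral_eq_integral(2))
    (simp add: set_integrable_def borel_integrable_compact)

lemma intT_eq_integral:
  "continuous_on (sphere 0 1) f \<Longrightarrow> intT f = integral {0..1} (\<lambda>\<theta>. f (circ \<theta>))"
  unfolding intT_def by (intro set_integral_eq_integral_01 continuous_on_circ_comp)

lemma L2T_norm_eq_integral:
  "continuous_on (sphere 0 1) f \<Longrightarrow>
     L2T_norm f = sqrt (integral {0..1} (\<lambda>\<theta>. (cmod (f (circ \<theta>)))\<^sup>2))"
  unfolding L2T_norm_def
  by (subst set_integral_eq_integral_01) (auto intro!: continuous_intros continuous_on_circ_comp)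

lemma integrable_circ_comp:
  fixes f :: "complex \<Rightarrow> 'a::banach"
  shows "continuous_on (sphere 0 1) f \<Longrightarrow> (\<lambda>\<theta>. f (circ \<theta>)) integrable_on {0..1}"
  by (intro integrable_continuous_interval continuous_on_circ_comp)

lemma intT_cong: "(\<And>z. cmod z = 1 \<Longrightarrow> f z = g z) \<Longrightarrow> intT f = intT g"
  unfolding intT_def by simp

lemma L2T_norm_cong: "(\<And>z. cmod z = 1 \<Longrightarrow> cmod (f z) = cmod (g z)) \<Longrightarrow> L2T_norm f = L2T_norm g"
  unfolding L2T_norm_def by simp

lemma intT_const: "intT (\<lambda>z. c) = c"
  by (simp add: intT_eq_integral)

lemma intT_add:
  "continuous_on (sphere 0 1) f \<Longrightarrow> continuous_on (sphere 0 1) g \<Longrightarrow>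
     intT (\<lambda>z. f z + g z) = intT f + intT g"
  by (simp add: intT_eq_integral continuous_on_add integral_add integrable_circ_comp)

lemma intT_diff:
  "continuous_on (sphere 0 1) f \<Longrightarrow> continuous_on (sphere 0 1) g \<Longrightarrow>
     intT (\<lambda>z. f z - g z) = intT f - intT g"
  by (simp add: intT_eq_integral continuous_on_diff integral_diff integrable_circ_comp)

lemma intT_mult_left: "continuous_on (sphere 0 1) f \<Longrightarrow> intT (\<lambda>z. c * f z) = c * intT f"
  by (simp add: intT_eq_integral continuous_on_mult_left)

lemma intT_sum:
  "finite J \<Longrightarrow> (\<And>j. j \<in> J \<Longrightarrow> continuous_on (sphere 0 1) (f j)) \<Longrightarrow>
     intT (\<lambda>z. \<Sum>j\<in>J. f j z) = (\<Sum>j\<in>J. intT (f j))"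
  by (simp add: intT_eq_integral continuous_on_sum integral_sum integrable_circ_comp)

lemma le_sqrt_mult_if_quadratic_nonneg:
  fixes A B C :: real
  assumes nonneg: "\<And>t. 0 \<le> t\<^sup>2 * A - 2 * t * C + B" and "0 \<le> A"
  shows "C \<le> sqrt A * sqrt B"
proof (cases "A = 0")
  case True
  have "0 \<le> B - 2 * ((B + 1) / (2 * C)) * C" if "C > 0"
    using nonneg[of "(B + 1) / (2 * C)"] True by simp
  moreover have "B - 2 * ((B + 1) / (2 * C)) * C = -1" if "C > 0"
    using that by (simp add: field_simps)
  ultimately have "C \<le> 0" by force
  moreover have "0 \<le> B" using nonneg[of 0] by simp
  ultimately show ?thesis using \<open>0 \<le> A\<close> by (metis mult_nonneg_nonneg real_sqrt_ge_zero order_trans)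
next
  case False
  then have "A > 0" using \<open>0 \<le> A\<close> by simp
  have "0 \<le> (C / A)\<^sup>2 * A - 2 * (C / A) * C + B" by (rule nonneg)
  also have "\<dots> = B - C\<^sup>2 / A" using \<open>A > 0\<close> by (simp add: field_simps power2_eq_square)
  finally have "C\<^sup>2 \<le> A * B" using \<open>A > 0\<close> by (simp add: field_simps)
  then have "sqrt (C\<^sup>2) \<le> sqrt (A * B)" by (rule real_sqrt_le_mono)
  then show ?thesis by (simp add: real_sqrt_mult)
qed

lemma Cauchy_Schwarz_integral:
  fixes f g :: "'a::euclidean_space \<Rightarrow> real"
  assumes f2: "(\<lambda>x. (f x)\<^sup>2) integrable_on S" and g2: "(\<lambda>x. (g x)\<^sup>2) integrable_on S"
    and fg: "(\<lambda>x. f x * g x) integrable_on S"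
  shows "integral S (\<lambda>x. f x * g x)
           \<le> sqrt (integral S (\<lambda>x. (f x)\<^sup>2)) * sqrt (integral S (\<lambda>x. (g x)\<^sup>2))"
proof (rule le_sqrt_mult_if_quadratic_nonneg)
  fix t :: real
  have expand: "(t * f x - g x)\<^sup>2 = t\<^sup>2 * (f x)\<^sup>2 - 2 * t * (f x * g x) + (g x)\<^sup>2" for x
    by (simp add: power2_eq_square algebra_simps)
  have "((\<lambda>x. (t * f x - g x)\<^sup>2) has_integral
         t\<^sup>2 * integral S (\<lambda>x. (f x)\<^sup>2) - 2 * t * integral S (\<lambda>x. f x * g x) + integral S (\<lambda>x. (g x)\<^sup>2)) S"
    unfolding expand
    by (intro has_integral_add has_integral_diff has_integral_mult_right integrable_integral f2 g2 fg)
  then show "0 \<le> t\<^sup>2 * integral S (\<lambda>x. (f x)\<^sup>2) - 2 * t * integral S (\<lambda>x. f x * g x) + integral S (\<lambda>x. (g x)\<^sup>2)"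
    by (rule has_integral_nonneg) simp
qed (use f2 in \<open>simp add: integral_nonneg\<close>)

lemma L2T_norm_mono:
  assumes "continuous_on (sphere 0 1) f" "continuous_on (sphere 0 1) g"
    and "\<And>z. cmod z = 1 \<Longrightarrow> cmod (f z) \<le> cmod (g z)"
  shows "L2T_norm f \<le> L2T_norm g"
  using assms unfolding L2T_norm_eq_integral[OF assms(1)] L2T_norm_eq_integral[OF assms(2)]
  by (intro real_sqrt_le_mono integral_le integrable_continuous_interval power_mono)
     (auto intro!: continuous_intros continuous_on_circ_comp)

lemma L2T_norm_add_le:
  assumes f: "continuous_on (sphere 0 1) f" and g: "continuous_on (sphere 0 1) g"
  shows "L2T_norm (\<lambda>z. f z + g z) \<le> L2T_norm f + L2T_norm g"
proof -
  define F where "F \<theta> = cmod (f (circ \<theta>))" for \<theta>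
  define G where "G \<theta> = cmod (g (circ \<theta>))" for \<theta>
  have "continuous_on {0..1} F" "continuous_on {0..1} G"
    unfolding F_def G_def using f g by (auto intro!: continuous_intros continuous_on_circ_comp)
  then have int: "(\<lambda>\<theta>. (F \<theta>)\<^sup>2) integrable_on {0..1}" "(\<lambda>\<theta>. (G \<theta>)\<^sup>2) integrable_on {0..1}"
      "(\<lambda>\<theta>. F \<theta> * G \<theta>) integrable_on {0..1}"
    by (auto intro!: integrable_continuous_interval continuous_intros)
  define A where "A = integral {0..1} (\<lambda>\<theta>. (F \<theta>)\<^sup>2)"
  define B where "B = integral {0..1} (\<lambda>\<theta>. (G \<theta>)\<^sup>2)"
  have "0 \<le> A" "0 \<le> B" unfolding A_def B_def using int by (auto intro: integral_nonneg)
  have "integral {0..1} (\<lambda>\<theta>. (cmod (f (circ \<theta>) + g (circ \<theta>)))\<^sup>2)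
      \<le> integral {0..1} (\<lambda>\<theta>. (F \<theta>)\<^sup>2 + 2 * (F \<theta> * G \<theta>) + (G \<theta>)\<^sup>2)"
  proof (rule integral_le)
    show "(\<lambda>\<theta>. (cmod (f (circ \<theta>) + g (circ \<theta>)))\<^sup>2) integrable_on {0..1}"
      using f g by (auto intro!: integrable_continuous_interval continuous_intros continuous_on_circ_comp)
    show "(\<lambda>\<theta>. (F \<theta>)\<^sup>2 + 2 * (F \<theta> * G \<theta>) + (G \<theta>)\<^sup>2) integrable_on {0..1}"
      using int by (intro integrable_add integrable_cmul) auto
    show "(cmod (f (circ \<theta>) + g (circ \<theta>)))\<^sup>2 \<le> (F \<theta>)\<^sup>2 + 2 * (F \<theta> * G \<theta>) + (G \<theta>)\<^sup>2" for \<theta>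
      using power_mono[OF norm_triangle_ineq norm_ge_zero, of "f (circ \<theta>)" "g (circ \<theta>)" 2]
      unfolding F_def G_def by (simp add: power2_sum)
  qed
  also have "\<dots> = A + 2 * integral {0..1} (\<lambda>\<theta>. F \<theta> * G \<theta>) + B"
    unfolding A_def B_def using int by (simp add: integral_add integrable_add integrable_cmul)
  also have "\<dots> \<le> (sqrt A + sqrt B)\<^sup>2"
    using Cauchy_Schwarz_integral[OF int] \<open>0 \<le> A\<close> \<open>0 \<le> B\<close>
    unfolding A_def[symmetric] B_def[symmetric] by (simp add: power2_sum)
  finally have "sqrt (integral {0..1} (\<lambda>\<theta>. (cmod (f (circ \<theta>) + g (circ \<theta>)))\<^sup>2)) \<le> sqrt A + sqrt B"
    using \<open>0 \<le> A\<close> \<open>0 \<le> B\<close> by (metis real_sqrt_le_mono real_sqrt_abs abs_of_nonneg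
      add_nonneg_nonneg real_sqrt_ge_zero)
  then show ?thesis
    using f g by (simp add: L2T_norm_eq_integral continuous_on_add A_def B_def F_def G_def)
qed

lemma L2T_norm_diff_le:
  assumes "continuous_on (sphere 0 1) f" "continuous_on (sphere 0 1) g"
  shows "L2T_norm (\<lambda>z. f z - g z) \<le> L2T_norm f + L2T_norm g"
  using L2T_norm_add_le[of f "\<lambda>z. - g z"] L2T_norm_cong[of "\<lambda>z. - g z" g] assms
  by (simp add: continuous_on_minus)

lemma L2T_norm_mult_diff_le:
  assumes cont: "continuous_on (sphere 0 1) x" "continuous_on (sphere 0 1) x'"
      "continuous_on (sphere 0 1) y" "continuous_on (sphere 0 1) y'"
    and bounded: "\<And>z. cmod z = 1 \<Longrightarrow> cmod (x' z) \<le> 1" "\<And>z. cmod z = 1 \<Longrightarrow> cmod (y z) \<le> 1"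
  shows "L2T_norm (\<lambda>z. x z * y z - x' z * y' z) \<le> L2T_norm (\<lambda>z. x z - x' z) + L2T_norm (\<lambda>z. y z - y' z)"
proof -
  have "L2T_norm (\<lambda>z. x z * y z - x' z * y' z) = L2T_norm (\<lambda>z. (x z - x' z) * y z + x' z * (y z - y' z))"
    by (rule L2T_norm_cong) (simp add: algebra_simps)
  also have "\<dots> \<le> L2T_norm (\<lambda>z. (x z - x' z) * y z) + L2T_norm (\<lambda>z. x' z * (y z - y' z))"
    using cont by (intro L2T_norm_add_le continuous_intros)
  also have "L2T_norm (\<lambda>z. (x z - x' z) * y z) \<le> L2T_norm (\<lambda>z. x z - x' z)"
    using cont bounded(2) by (intro L2T_norm_mono continuous_intros) (auto simp: norm_mult mult_left_le)
  also have "L2T_norm (\<lambda>z. x' z * (y z - y' z)) \<le> L2T_norm (\<lambda>z. y z - y' z)"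
    using cont bounded(1)
    by (intro L2T_norm_mono continuous_intros) (auto simp: norm_mult mult_left_le_one_le)
  finally show ?thesis by simp
qed

definition trig_poly :: "(complex \<Rightarrow> complex) \<Rightarrow> int \<Rightarrow> int \<Rightarrow> bool" where
  "trig_poly f lo hi \<longleftrightarrow> (\<exists>c. \<forall>z. cmod z = 1 \<longrightarrow> f z = (\<Sum>j\<in>{lo..hi}. c j * z powi j))"

lemma trig_poly_cong: "trig_poly f lo hi \<Longrightarrow> (\<And>z. cmod z = 1 \<Longrightarrow> g z = f z) \<Longrightarrow> trig_poly g lo hi"
  unfolding trig_poly_def by auto

lemma trig_poly_zero: "trig_poly (\<lambda>z. 0) lo hi"
  unfolding trig_poly_def by (intro exI[of _ "\<lambda>j. 0"]) simp

lemma trig_poly_add: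
  assumes "trig_poly f lo hi" "trig_poly g lo hi"
  shows "trig_poly (\<lambda>z. f z + g z) lo hi"
proof -
  obtain c where "\<And>z. cmod z = 1 \<Longrightarrow> f z = (\<Sum>j\<in>{lo..hi}. c j * z powi j)"
    using assms(1) unfolding trig_poly_def by blast
  moreover obtain d where "\<And>z. cmod z = 1 \<Longrightarrow> g z = (\<Sum>j\<in>{lo..hi}. d j * z powi j)"
    using assms(2) unfolding trig_poly_def by blast
  ultimately show ?thesis
    unfolding trig_poly_def by (intro exI[of _ "\<lambda>j. c j + d j"]) (simp add: distrib_right sum.distrib)
qed

lemma trig_poly_diff:
  assumes "trig_poly f lo hi" "trig_poly g lo hi"
  shows "trig_poly (\<lambda>z. f z - g z) lo hi"
proof -
  obtain c where "\<And>z. cmod z = 1 \<Longrightarrow> f z = (\<Sum>j\<in>{lo..hi}. c j * z powi j)"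
    using assms(1) unfolding trig_poly_def by blast
  moreover obtain d where "\<And>z. cmod z = 1 \<Longrightarrow> g z = (\<Sum>j\<in>{lo..hi}. d j * z powi j)"
    using assms(2) unfolding trig_poly_def by blast
  ultimately show ?thesis
    unfolding trig_poly_def by (intro exI[of _ "\<lambda>j. c j - d j"]) (simp add: left_diff_distrib sum_subtractf)
qed

lemma trig_poly_monomial: "j \<in> {lo..hi} \<Longrightarrow> trig_poly (\<lambda>z. a * z powi j) lo hi"
  unfolding trig_poly_def
  by (intro exI[of _ "\<lambda>i. if i = j then a else 0"]) (simp add: if_distrib[of "\<lambda>x. x * _"] cong: if_cong)

lemma trig_poly_sum:
  "finite S \<Longrightarrow> (\<And>i. i \<in> S \<Longrightarrow> trig_poly (f i) lo hi) \<Longrightarrow> trig_poly (\<lambda>z. \<Sum>i\<in>S. f i z) lo hi"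
  by (induction S rule: finite_induct) (auto intro: trig_poly_zero trig_poly_add)

lemma trig_poly_mono:
  assumes "trig_poly f lo hi" "lo' \<le> lo" "hi \<le> hi'"
  shows "trig_poly f lo' hi'"
proof -
  obtain c where c: "\<And>z. cmod z = 1 \<Longrightarrow> f z = (\<Sum>j\<in>{lo..hi}. c j * z powi j)"
    using assms(1) unfolding trig_poly_def by blast
  have "trig_poly (\<lambda>z. \<Sum>j\<in>{lo..hi}. c j * z powi j) lo' hi'"
    using assms(2,3) by (intro trig_poly_sum trig_poly_monomial) auto
  then show ?thesis by (rule trig_poly_cong) (rule c)
qed

lemma trig_poly_mult:
  assumes "trig_poly f l1 h1" "trig_poly g l2 h2"
  shows "trig_poly (\<lambda>z. f z * g z) (l1 + l2) (h1 + h2)"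
proof -
  obtain c where c: "\<And>z. cmod z = 1 \<Longrightarrow> f z = (\<Sum>i\<in>{l1..h1}. c i * z powi i)"
    using assms(1) unfolding trig_poly_def by blast
  obtain d where d: "\<And>z. cmod z = 1 \<Longrightarrow> g z = (\<Sum>j\<in>{l2..h2}. d j * z powi j)"
    using assms(2) unfolding trig_poly_def by blast
  have "trig_poly (\<lambda>z. \<Sum>(i, j)\<in>{l1..h1} \<times> {l2..h2}. c i * d j * z powi (i + j)) (l1 + l2) (h1 + h2)"
    by (auto intro!: trig_poly_sum trig_poly_monomial)
  then show ?thesis
  proof (rule trig_poly_cong)
    fix z :: complex
    assume "cmod z = 1"
    then have "z \<noteq> 0" by auto
    then show "f z * g z = (\<Sum>(i, j)\<in>{l1..h1} \<times> {l2..h2}. c i * d j * z powi (i + j))"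
      by (simp add: c d \<open>cmod z = 1\<close> sum_product sum.cartesian_product power_int_add mult_ac)
  qed
qed

lemma trig_poly_cnj:
  assumes "trig_poly f lo hi"
  shows "trig_poly (\<lambda>z. cnj (f z)) (- hi) (- lo)"
proof -
  obtain c where c: "\<And>z. cmod z = 1 \<Longrightarrow> f z = (\<Sum>j\<in>{lo..hi}. c j * z powi j)"
    using assms unfolding trig_poly_def by blast
  have "trig_poly (\<lambda>z. \<Sum>j\<in>{lo..hi}. cnj (c j) * z powi (- j)) (- hi) (- lo)"
    by (auto intro!: trig_poly_sum trig_poly_monomial)
  then show ?thesis
    by (rule trig_poly_cong) (simp add: c cnj_on_circle power_int_minus power_int_inverse)
qed

lemma trig_poly_star: "trig_poly f lo hi \<Longrightarrow> trig_poly (star f) (- hi) (- lo)"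
  by (erule trig_poly_cong[OF trig_poly_cnj]) (rule star_on_circle)

lemma continuous_on_powi_circle: "continuous_on (sphere 0 1) (\<lambda>z::complex. z powi j)"
  by (intro continuous_intros) auto

lemma trig_poly_continuous:
  assumes "trig_poly f lo hi"
  shows "continuous_on (sphere 0 1) f"
proof -
  obtain c where c: "\<And>z. cmod z = 1 \<Longrightarrow> f z = (\<Sum>j\<in>{lo..hi}. c j * z powi j)"
    using assms unfolding trig_poly_def by blast
  have "continuous_on (sphere 0 1) (\<lambda>z. \<Sum>j\<in>{lo..hi}. c j * z powi j)"
    by (intro continuous_intros continuous_on_powi_circle)
  then show ?thesis by (rule continuous_on_eq) (simp add: c)
qed

lemma intT_powi: "intT (\<lambda>z. z powi j) = (if j = 0 then 1 else 0)"
proof -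
  define w where "w = 2 * pi * of_int j * \<i>"
  have "circ \<theta> powi j = exp (w * complex_of_real \<theta>)" for \<theta>
    unfolding w_def circ_def cis_conv_exp exp_power_int by (simp add: algebra_simps)
  then have "intT (\<lambda>z. z powi j) = integral {0..1} (\<lambda>\<theta>. exp (w * complex_of_real \<theta>))"
    by (simp add: intT_eq_integral continuous_on_powi_circle)
  also have "\<dots> = (if j = 0 then 1 else 0)"
  proof (cases "j = 0")
    case False
    then have "w \<noteq> 0" by (simp add: w_def)
    moreover have "exp w = 1"
      using exp_integer_2pi[of "of_int j"] by (simp add: w_def algebra_simps)
    ultimately show ?thesis using False by (simp add: integral_exp)
  qed (simp add: w_def)
  finally show ?thesis .
qed

lemma intT_monomial_sum: "finite J \<Longrightarrow> intT (\<lambda>z. \<Sum>j\<in>J. c j * z powi j) = (if 0 \<in> J then c 0 else 0)"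
  by (simp add: intT_sum intT_mult_left intT_powi continuous_on_mult_left continuous_on_powi_circle
      if_distrib[of "\<lambda>x. _ * x"] sum.delta cong: if_cong)

lemma intT_trig_poly_neg_freq:
  assumes "trig_poly f lo hi" "hi < 0"
  shows "intT f = 0"
proof -
  obtain c where c: "\<And>z. cmod z = 1 \<Longrightarrow> f z = (\<Sum>j\<in>{lo..hi}. c j * z powi j)"
    using assms(1) unfolding trig_poly_def by blast
  then have "intT f = intT (\<lambda>z. \<Sum>j\<in>{lo..hi}. c j * z powi j)" by (rule intT_cong)
  with assms(2) show ?thesis by (simp add: intT_monomial_sum)
qed

text \<open>The mean of a polynomial in \<open>1/z\<close> is its value at \<open>\<infinity>\<close>, and evaluation at \<open>\<infinity>\<close> is
  multiplicative.\<close>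
lemma intT_mult_nonpos_freq:
  assumes f: "trig_poly f l1 0" and g: "trig_poly g l2 0"
  shows "intT (\<lambda>z. f z * g z) = intT f * intT g"
proof -
  obtain d where d: "\<And>z. cmod z = 1 \<Longrightarrow> g z = (\<Sum>j\<in>{min l2 0..0}. d j * z powi j)"
    using trig_poly_mono[OF g, of "min l2 0" 0] unfolding trig_poly_def by auto
  define g1 where "g1 z = (\<Sum>j\<in>{min l2 0..-1}. d j * z powi j)" for z
  have split: "{min l2 0..0} = insert 0 {min l2 0..-1}" by auto
  have g_eq: "g z = d 0 + g1 z" if "cmod z = 1" for z
    using d[OF that] by (simp add: split g1_def)
  have "intT g = d 0"
    using intT_cong[OF d] by (simp add: intT_monomial_sum)
  have fg1: "trig_poly (\<lambda>z. f z * g1 z) (l1 + min l2 0) (0 + -1)"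
    by (rule trig_poly_mult[OF f]) (auto simp: trig_poly_def g1_def)
  have "intT (\<lambda>z. f z * g z) = intT (\<lambda>z. d 0 * f z + f z * g1 z)"
    by (rule intT_cong) (simp add: g_eq algebra_simps)
  also have "\<dots> = d 0 * intT f + intT (\<lambda>z. f z * g1 z)"
    using trig_poly_continuous[OF f] trig_poly_continuous[OF fg1]
    by (simp add: intT_add intT_mult_left continuous_on_mult_left)
  also have "intT (\<lambda>z. f z * g1 z) = 0"
    by (rule intT_trig_poly_neg_freq[OF fg1]) simp
  finally show ?thesis using \<open>intT g = d 0\<close> by simp
qed

text \<open>Pairs in \<open>L\<close> of the shape of nonlinear Fourier series of sequences supported in
  \<open>{lo..<hi}\<close>.\<close>
definition L_window :: "int \<Rightarrow> int \<Rightarrow> nlpair \<Rightarrow> bool" where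
  "L_window lo hi p \<longleftrightarrow>
     trig_poly (fst p) (lo - hi) 0 \<and> trig_poly (snd p) lo (hi - 1) \<and>
     (\<exists>x>0. at_inf (fst p) = complex_of_real x) \<and>
     (\<forall>z. cmod z = 1 \<longrightarrow> (cmod (fst p z))\<^sup>2 + (cmod (snd p z))\<^sup>2 = 1)"

lemma L_window_mono: "L_window lo m p \<Longrightarrow> m \<le> hi \<Longrightarrow> L_window lo hi p"
  unfolding L_window_def by (auto elim!: trig_poly_mono)

lemma L_window_one: "L_window lo lo nlft_one"
proof -
  have "trig_poly (\<lambda>z. 1) 0 0"
    using trig_poly_monomial[of 0 0 0 1] by simp
  then show ?thesis
    unfolding L_window_def nlft_one_def at_inf_def by (auto simp: trig_poly_zero intT_const intro: exI[of _ 1])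
qed

lemma L_window_nlft_factor: "L_window k (k + 1) (nlft_factor F k)"
proof -
  define r where "r = 1 / sqrt (1 + (cmod (F k))\<^sup>2)"
  have "r > 0" by (simp add: r_def add_pos_nonneg)
  have r_sq: "r\<^sup>2 * (1 + (cmod (F k))\<^sup>2) = 1"
    using add_pos_nonneg[OF zero_less_one zero_le_power2[of "cmod (F k)"]]
    unfolding r_def by (simp add: power_divide)
  have "trig_poly (\<lambda>z. complex_of_real r) (-1) 0"
    using trig_poly_monomial[of 0 "-1" 0 "complex_of_real r"] by simp
  moreover have "trig_poly (\<lambda>z. complex_of_real r * F k * z powi k) k k"
    by (rule trig_poly_monomial) simp
  moreover have "(cmod (complex_of_real r))\<^sup>2 + (cmod (complex_of_real r * F k * z powi k))\<^sup>2 = 1"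
    if "cmod z = 1" for z
    using that \<open>r > 0\<close> r_sq by (simp add: norm_mult norm_power_int power_mult_distrib algebra_simps)
  ultimately show ?thesis
    unfolding L_window_def nlft_factor_def r_def[symmetric] at_inf_def using \<open>r > 0\<close>
    by (auto simp: intT_const)
qed

text \<open>Multiplicativity of the norm of quaternions \<open>a + b j\<close>, which is what \<open>pmult\<close> multiplies.\<close>
lemma norm_quaternion_mult:
  fixes a b c d :: complex
  shows "(cmod (a * c - b * cnj d))\<^sup>2 + (cmod (a * d + b * cnj c))\<^sup>2
           = ((cmod a)\<^sup>2 + (cmod b)\<^sup>2) * ((cmod c)\<^sup>2 + (cmod d)\<^sup>2)"
proof -
  have "complex_of_real ((cmod (a * c - b * cnj d))\<^sup>2 + (cmod (a * d + b * cnj c))\<^sup>2)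
      = complex_of_real (((cmod a)\<^sup>2 + (cmod b)\<^sup>2) * ((cmod c)\<^sup>2 + (cmod d)\<^sup>2))"
    by (simp only: of_real_add of_real_mult complex_norm_square complex_cnj_diff complex_cnj_mult
        complex_cnj_add complex_cnj_cnj) (simp add: algebra_simps)
  then show ?thesis by (simp only: of_real_eq_iff)
qed

lemma at_inf_pmult:
  assumes "L_window lo m p" "L_window m hi q"
  shows "at_inf (fst (pmult p q)) = at_inf (fst p) * at_inf (fst q)"
proof (cases p, cases q)
  fix a b c d
  assume pq: "p = (a, b)" "q = (c, d)"
  have a: "trig_poly a (lo - m) 0" and b: "trig_poly b lo (m - 1)"
    and c: "trig_poly c (m - hi) 0" and d: "trig_poly d m (hi - 1)"
    using assms unfolding pq L_window_def by auto
  have ac: "trig_poly (\<lambda>z. a z * c z) (lo - m + (m - hi)) (0 + 0)"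
    by (rule trig_poly_mult[OF a c])
  have bd: "trig_poly (\<lambda>z. b z * star d z) (lo + - (hi - 1)) (m - 1 + - m)"
    by (rule trig_poly_mult[OF b trig_poly_star[OF d]])
  have "intT (\<lambda>z. a z * c z - b z * star d z) = intT (\<lambda>z. a z * c z) - intT (\<lambda>z. b z * star d z)"
    by (rule intT_diff[OF trig_poly_continuous[OF ac] trig_poly_continuous[OF bd]])
  also have "\<dots> = intT a * intT c"
    using intT_mult_nonpos_freq[OF a c] intT_trig_poly_neg_freq[OF bd] by simp
  finally show ?thesis
    unfolding pq at_inf_def pmult_def by simp
qed

lemma L_window_pmult:
  assumes "L_window lo m p" "L_window m hi q"
  shows "L_window lo hi (pmult p q)"
proof (cases p, cases q)
  fix a b c d
  assume pq: "p = (a, b)" "q = (c, d)"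
  have a: "trig_poly a (lo - m) 0" and b: "trig_poly b lo (m - 1)"
    and c: "trig_poly c (m - hi) 0" and d: "trig_poly d m (hi - 1)"
    and unit: "\<And>z. cmod z = 1 \<Longrightarrow> (cmod (a z))\<^sup>2 + (cmod (b z))\<^sup>2 = 1"
      "\<And>z. cmod z = 1 \<Longrightarrow> (cmod (c z))\<^sup>2 + (cmod (d z))\<^sup>2 = 1"
    using assms unfolding pq L_window_def by auto
  have "trig_poly (\<lambda>z. a z * c z - b z * star d z) (lo - hi) 0"
    by (intro trig_poly_diff trig_poly_mono[OF trig_poly_mult[OF a c]]
        trig_poly_mono[OF trig_poly_mult[OF b trig_poly_star[OF d]]]) auto
  moreover have "trig_poly (\<lambda>z. a z * d z + b z * star c z) lo (hi - 1)"
    by (intro trig_poly_add trig_poly_mono[OF trig_poly_mult[OF a d]]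
        trig_poly_mono[OF trig_poly_mult[OF b trig_poly_star[OF c]]]) auto
  moreover have "\<exists>x>0. at_inf (fst (pmult p q)) = complex_of_real x"
  proof -
    obtain x y where "x > 0" "at_inf a = complex_of_real x" "y > 0" "at_inf c = complex_of_real y"
      using assms unfolding pq L_window_def by auto
    then show ?thesis
      using at_inf_pmult[OF assms] unfolding pq by (intro exI[of _ "x * y"]) simp
  qed
  moreover have "(cmod (a z * c z - b z * star d z))\<^sup>2 + (cmod (a z * d z + b z * star c z))\<^sup>2 = 1"
    if "cmod z = 1" for z
    using norm_quaternion_mult[of "a z" "c z" "b z" "d z"] unit[OF that] star_on_circle[OF that]
    by simp
  ultimately show ?thesis
    unfolding pq L_window_def pmult_def at_inf_def by simp
qed

lemma L_window_foldl_nlft_factor: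
  assumes "sorted_wrt (<) ks" "set ks \<subseteq> {lo..<hi}" "lo \<le> hi"
  shows "L_window lo hi (foldl (\<lambda>acc k. pmult acc (nlft_factor F k)) nlft_one ks)"
  using assms
proof (induction ks arbitrary: hi rule: rev_induct)
  case Nil
  then show ?case by (auto intro: L_window_mono[OF L_window_one])
next
  case (snoc k ks)
  then have "L_window lo k (foldl (\<lambda>acc k. pmult acc (nlft_factor F k)) nlft_one ks)"
    by (intro snoc.IH) (auto simp: sorted_wrt_append)
  then have "L_window lo (k + 1) (foldl (\<lambda>acc k. pmult acc (nlft_factor F k)) nlft_one (ks @ [k]))"
    by (simp add: L_window_pmult L_window_nlft_factor)
  then show ?case
    by (rule L_window_mono) (use snoc.prems in auto)
qed

lemma L_window_nlft:
  "finite (supp F) \<Longrightarrow> supp F \<subseteq> {lo..<hi} \<Longrightarrow> lo \<le> hi \<Longrightarrow> L_window lo hi (nlft F)"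
  unfolding nlft_def by (intro L_window_foldl_nlft_factor) auto

lemma L2T_norm_pmult_diff_le:
  assumes cont: "\<And>f. f \<in> {a, b, c, d, a', b', c', d'} \<Longrightarrow> continuous_on (sphere 0 1) f"
    and bounded: "\<And>f z. f \<in> {a', b', c, d} \<Longrightarrow> cmod z = 1 \<Longrightarrow> cmod (f z) \<le> 1"
  shows "L2T_norm (\<lambda>z. fst (pmult (a, b) (c, d)) z - fst (pmult (a', b') (c', d')) z)
         + L2T_norm (\<lambda>z. snd (pmult (a, b) (c, d)) z - snd (pmult (a', b') (c', d')) z)
       \<le> 2 * (L2T_norm (\<lambda>z. a z - a' z) + L2T_norm (\<lambda>z. b z - b' z))
         + 2 * (L2T_norm (\<lambda>z. c z - c' z) + L2T_norm (\<lambda>z. d z - d' z))"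
proof -
  have cnj_diff: "L2T_norm (\<lambda>z. cnj (f z) - cnj (g z)) = L2T_norm (\<lambda>z. f z - g z)" for f g
    by (rule L2T_norm_cong) (metis complex_cnj_diff complex_mod_cnj)
  have prod: "L2T_norm (\<lambda>z. x z * y z - x' z * y' z) \<le> L2T_norm (\<lambda>z. x z - x' z) + L2T_norm (\<lambda>z. y z - y' z)"
    if "x \<in> {a, b}" "x' \<in> {a', b'}" "y \<in> {c, d}" "y' \<in> {c', d'}" for x x' y y'
    using that by (intro L2T_norm_mult_diff_le cont bounded) auto
  have prod_cnj: "L2T_norm (\<lambda>z. x z * cnj (y z) - x' z * cnj (y' z))
      \<le> L2T_norm (\<lambda>z. x z - x' z) + L2T_norm (\<lambda>z. y z - y' z)"
    if "x \<in> {a, b}" "x' \<in> {a', b'}" "y \<in> {c, d}" "y' \<in> {c', d'}" for x x' y y'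
  proof -
    have "L2T_norm (\<lambda>z. x z * cnj (y z) - x' z * cnj (y' z))
        \<le> L2T_norm (\<lambda>z. x z - x' z) + L2T_norm (\<lambda>z. cnj (y z) - cnj (y' z))"
      using that by (intro L2T_norm_mult_diff_le continuous_on_cnj cont) (auto intro: bounded)
    then show ?thesis by (simp only: cnj_diff)
  qed
  have "L2T_norm (\<lambda>z. fst (pmult (a, b) (c, d)) z - fst (pmult (a', b') (c', d')) z)
      = L2T_norm (\<lambda>z. (a z * c z - a' z * c' z) - (b z * cnj (d z) - b' z * cnj (d' z)))"
    by (rule L2T_norm_cong) (simp add: pmult_def star_on_circle algebra_simps)
  also have "\<dots> \<le> L2T_norm (\<lambda>z. a z * c z - a' z * c' z) + L2T_norm (\<lambda>z. b z * cnj (d z) - b' z * cnj (d' z))"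
    by (intro L2T_norm_diff_le continuous_intros cont) auto
  finally have fst_le: "L2T_norm (\<lambda>z. fst (pmult (a, b) (c, d)) z - fst (pmult (a', b') (c', d')) z)
      \<le> L2T_norm (\<lambda>z. a z - a' z) + L2T_norm (\<lambda>z. c z - c' z)
        + L2T_norm (\<lambda>z. b z - b' z) + L2T_norm (\<lambda>z. d z - d' z)"
    using prod[of a a' c c'] prod_cnj[of b b' d d'] by simp
  have "L2T_norm (\<lambda>z. snd (pmult (a, b) (c, d)) z - snd (pmult (a', b') (c', d')) z)
      = L2T_norm (\<lambda>z. (a z * d z - a' z * d' z) + (b z * cnj (c z) - b' z * cnj (c' z)))"
    by (rule L2T_norm_cong) (simp add: pmult_def star_on_circle algebra_simps)
  also have "\<dots> \<le> L2T_norm (\<lambda>z. a z * d z - a' z * d' z) + L2T_norm (\<lambda>z. b z * cnj (c z) - b' z * cnj (c' z))"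
    by (intro L2T_norm_add_le continuous_intros cont) auto
  finally have snd_le: "L2T_norm (\<lambda>z. snd (pmult (a, b) (c, d)) z - snd (pmult (a', b') (c', d')) z)
      \<le> L2T_norm (\<lambda>z. a z - a' z) + L2T_norm (\<lambda>z. d z - d' z)
        + L2T_norm (\<lambda>z. b z - b' z) + L2T_norm (\<lambda>z. c z - c' z)"
    using prod[of a a' d d'] prod_cnj[of b b' c c'] by simp
  from fst_le snd_le show ?thesis by simp
qed

lemma L_window_continuous:
  "L_window lo hi p \<Longrightarrow> continuous_on (sphere 0 1) (fst p) \<and> continuous_on (sphere 0 1) (snd p)"
  unfolding L_window_def by (auto intro: trig_poly_continuous)

lemma L_window_norm_le_1:
  assumes "L_window lo hi p" "cmod z = 1"
  shows "cmod (fst p z) \<le> 1 \<and> cmod (snd p z) \<le> 1"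
proof -
  have "(cmod (fst p z))\<^sup>2 + (cmod (snd p z))\<^sup>2 = 1"
    using assms unfolding L_window_def by auto
  then have "(cmod (fst p z))\<^sup>2 \<le> 1" "(cmod (snd p z))\<^sup>2 \<le> 1"
    using zero_le_power2[of "cmod (fst p z)"] zero_le_power2[of "cmod (snd p z)"] by linarith+
  then show ?thesis
    by (simp add: abs_square_le_1)
qed

lemma ln_at_inf_pmult:
  assumes "L_window lo m p" "L_window m hi q"
  shows "ln (Re (at_inf (fst (pmult p q)))) = ln (Re (at_inf (fst p))) + ln (Re (at_inf (fst q)))"
proof -
  obtain x y where "x > 0" "at_inf (fst p) = complex_of_real x" "y > 0" "at_inf (fst q) = complex_of_real y"
    using assms unfolding L_window_def by auto
  then show ?thesis
    using at_inf_pmult[OF assms] by (simp add: ln_mult)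
qed

lemma rho_pmult_le:
  assumes p: "L_window lo m p" "L_window lo m p'" and q: "L_window m hi q" "L_window m hi q'"
  shows "rho (pmult p q) (pmult p' q') \<le> 2 * rho p p' + 2 * rho q q'"
proof -
  obtain a b a' b' c d c' d' where pq: "p = (a, b)" "p' = (a', b')" "q = (c, d)" "q' = (c', d')"
    by (metis surj_pair)
  have "L2T_norm (\<lambda>z. fst (pmult (a, b) (c, d)) z - fst (pmult (a', b') (c', d')) z)
         + L2T_norm (\<lambda>z. snd (pmult (a, b) (c, d)) z - snd (pmult (a', b') (c', d')) z)
       \<le> 2 * (L2T_norm (\<lambda>z. a z - a' z) + L2T_norm (\<lambda>z. b z - b' z))
         + 2 * (L2T_norm (\<lambda>z. c z - c' z) + L2T_norm (\<lambda>z. d z - d' z))"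
    using L_window_continuous[OF p(1)] L_window_continuous[OF p(2)]
      L_window_continuous[OF q(1)] L_window_continuous[OF q(2)]
      L_window_norm_le_1[OF p(2)] L_window_norm_le_1[OF q(1)]
    unfolding pq by (intro L2T_norm_pmult_diff_le) auto
  moreover have "\<bar>ln (Re (at_inf (fst (pmult p q)))) - ln (Re (at_inf (fst (pmult p' q'))))\<bar>
      \<le> \<bar>ln (Re (at_inf a)) - ln (Re (at_inf a'))\<bar> + \<bar>ln (Re (at_inf c)) - ln (Re (at_inf c'))\<bar>"
    using ln_at_inf_pmult[OF p(1) q(1)] ln_at_inf_pmult[OF p(2) q(2)] unfolding pq by simp
  ultimately show ?thesis
    unfolding pq rho_def pmult_def prod.case fst_conv snd_conv
    by (rule order_trans[OF add_mono]) simp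
qed

lemma separating_intervals:
  fixes S T :: "int set"
  assumes "finite S" "finite T" "\<forall>j\<in>S. \<forall>k\<in>T. j < k"
  obtains lo m hi where "lo \<le> m" "m \<le> hi" "S \<subseteq> {lo..<m}" "T \<subseteq> {m..<hi}"
proof -
  obtain k where k: "\<And>x. x \<in> S \<union> T \<Longrightarrow> \<bar>x\<bar> < k"
    using finite_int_iff_bounded[of "S \<union> T"] assms(1,2) by auto
  define m where "m = (if T = {} then k else Min T)"
  have "S \<subseteq> {- \<bar>k\<bar>..<m}"
  proof
    fix x
    assume "x \<in> S"
    then show "x \<in> {- \<bar>k\<bar>..<m}"
      using k[of x] abs_ge_self[of k] assms(2,3) by (auto simp: m_def abs_less_iff)
  qed
  moreover have "T \<subseteq> {m..<\<bar>k\<bar>}"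
  proof
    fix x
    assume "x \<in> T"
    then show "x \<in> {m..<\<bar>k\<bar>}"
      using k[of x] abs_ge_self[of k] assms(2) by (auto simp: m_def abs_less_iff)
  qed
  moreover have "\<bar>m\<bar> \<le> \<bar>k\<bar>"
    using k[of "Min T"] Min_in[OF assms(2)] abs_ge_self[of k] by (cases "T = {}") (auto simp: m_def)
  ultimately show ?thesis
    by (intro that) (auto simp: abs_le_iff)
qed

theorem theorem6p1:
  fixes F Ft G Gt :: "int \<Rightarrow> complex"
  assumes "finite (supp F)" and "finite (supp Ft)" and "finite (supp G)" and "finite (supp Gt)"
    and "\<forall>j \<in> supp F \<union> supp Ft. \<forall>k \<in> supp G \<union> supp Gt. j < k"
  shows "rho (pmult (nlft F) (nlft G)) (pmult (nlft Ft) (nlft Gt))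
           \<le> 2 * rho (nlft F) (nlft Ft) + 2 * rho (nlft G) (nlft Gt)"
proof -
  obtain lo m hi where "lo \<le> m" "m \<le> hi"
    and "supp F \<union> supp Ft \<subseteq> {lo..<m}" "supp G \<union> supp Gt \<subseteq> {m..<hi}"
    using separating_intervals[of "supp F \<union> supp Ft" "supp G \<union> supp Gt"] assms by auto
  then have "L_window lo m (nlft F)" "L_window lo m (nlft Ft)"
    "L_window m hi (nlft G)" "L_window m hi (nlft Gt)"
    using assms(1-4) by (auto intro!: L_window_nlft)
  then show ?thesis by (rule rho_pmult_le)
qed

end
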